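(* Let $p$ be a prime, $t\in\mathbb{N}$, $b_1,\ldots,b_t\in\mathbb{F}_p[X]$ monic, nonconstant, pairwise coprime. For $C>0$ let $$E_C=\{L\in\mathcal H\text{ irrational}:\ p^{\deg(A_h(b_1^{l_1}\cdots b_t^{l_t}L))}<C(\bar l_1\cdots\bar l_t h)^4\ \text{for all }l_1,\ldots,l_t\in\mathbb{N}_0,\ h\in\mathbb{N}\},$$ where $\bar l=\max(1,l)$. Then $h(\mathcal H\setminus E_C)\le c_p\,\frac{\log C}{C}$ for all sufficiently large $C$, with $c_p$ depending only on $p$ (and $t$); in particular $\lim_{C\to\infty}h(E_C)=1$.
   Context: $\mathcal H=\{L\in\mathbb{F}_p((X^{-1})):\nu(L)<0\}$, where for $L=\sum_{i=w}^\infty a_iX^{-i}$ with $a_w\ne0$, $\nu(L)=-w$; $h$ is the normalized Haar measure on $\mathcal H$. For an irrational $M\in\mathbb{F}_p((X^{-1}))$ with continued fraction expansion $[A_0;A_1,A_2,\ldots]$ ($A_i\in\mathbb{F}_p[X]$, $\deg A_i\ge1$ for $i\ge1$), $A_h(M)$ denotes the $h$-th partial quotient. *)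

theory Defs
  imports "HOL-Probability.Probability" "HOL-Computational_Algebra.Computational_Algebra"
begin

text \<open>Laurent series in X^{-1} over a field are modelled as formal Laurent series
  in the variable T = X^{-1} (type 'a fls).  A polynomial b(X) becomes b(T^{-1}).\<close>

definition poly_to_fls :: "'a::field poly \<Rightarrow> 'a fls" where
  "poly_to_fls b = (\<Sum>i\<le>degree b. fls_const (coeff b i) * fls_X_inv ^ i)"

text \<open>Polynomial (integer) part [M] in F[X]: coefficient of X^i is the coefficient of T^{-i}.\<close>
definition cf_int :: "'a::field fls \<Rightarrow> 'a poly" where
  "cf_int M = fls_prpart M + [:fls_nth M 0:]"

definition is_rational_fls :: "'a::field fls \<Rightarrow> bool" where
  "is_rational_fls M \<longleftrightarrow> (\<exists>P Q. Q \<noteq> 0 \<and> poly_to_fls Q * M = poly_to_fls P)"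

fun cf_rest :: "'a::field fls \<Rightarrow> nat \<Rightarrow> 'a fls" where
  "cf_rest M 0 = M"
| "cf_rest M (Suc h) = inverse (cf_rest M h - poly_to_fls (cf_int (cf_rest M h)))"

definition cf_quot :: "'a::field fls \<Rightarrow> nat \<Rightarrow> 'a poly" where
  "cf_quot M h = cf_int (cf_rest M h)"

text \<open>The set H = {L : nu(L) < 0} is parametrised by coefficient sequences a:
  L = sum_{n>=0} a n X^{-(n+1)}; the normalised Haar measure is the product of uniform
  measures on the coefficients.\<close>
definition seq_to_fls :: "(nat \<Rightarrow> 'a::field) \<Rightarrow> 'a fls" where
  "seq_to_fls a = fps_to_fls (fps_X * Abs_fps a)"

definition haarH :: "(nat \<Rightarrow> 'a::{field,finite}) measure" where
  "haarH = PiM UNIV (\<lambda>_::nat. measure_pmf (pmf_of_set (UNIV::'a set)))"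

definition E_set :: "nat \<Rightarrow> (nat \<Rightarrow> 'a::{field,finite} poly) \<Rightarrow> real \<Rightarrow> (nat \<Rightarrow> 'a) set" where
  "E_set t b C = {a. \<not> is_rational_fls (seq_to_fls a) \<and>
     (\<forall>l::nat \<Rightarrow> nat. \<forall>h::nat. h \<ge> 1 \<longrightarrow>
        real (CARD('a)) ^ degree (cf_quot (poly_to_fls (\<Prod>i<t. b i ^ l i) * seq_to_fls a) h)
          < C * (real (\<Prod>i<t. max 1 (l i)) * real h) ^ 4)}"

end

theory Submission
  imports Defs
begin

(*
  Identify L in H with its coefficient sequence (a_0, a_1, ...), L = sum a_n X^-(n+1); Haar measure
  is then the product of uniform measures.  The complete quotients of B L, for a monic polynomial B,
  are obtained by first taking the fractional part of B L and then iterating the Gauss map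
  x |-> 1/x - [1/x].  Both maps preserve Haar measure: the n-th output coefficient depends on
  finitely many input coefficients and is a bijective affine function of the last of them, so
  prescribing output coefficients has the same probability as prescribing input coefficients.
  Since deg [1/y] = k forces the first k - 1 coefficients of y to vanish, p^(deg A_h(B L)) >= X
  has probability at most p / X.  A union bound over all exponent vectors l and indices h, with
  X = C (l_1 ... l_t h)^4, whose reciprocals are summable, bounds the measure of the complement of
  E_C by c_p / C, which is stronger than the claimed c_p log C / C; the rational series form a
  countable, hence null, set.
*)

unbundle fps_syntax

section \<open>Partial quotients via the Gauss map\<close>

definition frac_seq :: "'a::field fls \<Rightarrow> nat \<Rightarrow> 'a" where
  "frac_seq M = (\<lambda>n. M $$ (int n + 1))"

lemma poly_to_fls_nth: "poly_to_fls P $$ n = (if n \<le> 0 then coeff P (nat (-n)) else 0)"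
proof -
  have "poly_to_fls P $$ n = (\<Sum>i\<le>degree P. coeff P i * (if n = - int i then 1 else 0))"
    unfolding poly_to_fls_def by (simp add: fls_nth_sum)
  also have "\<dots> = (\<Sum>i\<le>degree P. if i = nat (-n) \<and> n \<le> 0 then coeff P i else 0)"
    by (intro sum.cong) auto
  also have "\<dots> = (if n \<le> 0 then coeff P (nat (-n)) else 0)"
  proof (cases "n \<le> 0 \<and> nat (-n) \<le> degree P")
    case True then show ?thesis by (simp add: sum.delta)
  next
    case False then show ?thesis by (auto simp: coeff_eq_0 sum.delta)
  qed
  finally show ?thesis .
qed

lemma seq_to_fls_nth: "seq_to_fls a $$ n = (if n \<ge> 1 then a (nat n - 1) else 0)"
  unfolding seq_to_fls_def by auto

lemma seq_to_fls_nth_Suc [simp]: "seq_to_fls a $$ (int i + 1) = a i"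
  by (simp add: seq_to_fls_nth nat_add_distrib)

lemma seq_to_fls_0 [simp]: "seq_to_fls (\<lambda>_. 0) = 0"
  by (simp add: fls_eq_iff seq_to_fls_nth)

lemma fls_minus_cf_int: "M - poly_to_fls (cf_int M) = seq_to_fls (frac_seq M)"
proof (rule fls_eqI)
  fix n :: int
  show "(M - poly_to_fls (cf_int M)) $$ n = seq_to_fls (frac_seq M) $$ n"
    by (cases "n \<le> 0") (auto simp: poly_to_fls_nth seq_to_fls_nth cf_int_def frac_seq_def coeff_pCons
        split: nat.splits)
qed

definition gauss_map :: "(nat \<Rightarrow> 'a::field) \<Rightarrow> nat \<Rightarrow> 'a" where
  "gauss_map a = frac_seq (inverse (seq_to_fls a))"

lemma cf_rest_Suc_gauss_map: "cf_rest M (Suc h) = inverse (seq_to_fls ((gauss_map ^^ h) (frac_seq M)))"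
proof (induction h)
  case 0 then show ?case by (simp add: fls_minus_cf_int)
next
  case (Suc h)
  have "cf_rest M (Suc (Suc h)) = inverse (seq_to_fls (frac_seq (cf_rest M (Suc h))))"
    by (simp only: cf_rest.simps(2)[of M "Suc h"] fls_minus_cf_int)
  also have "\<dots> = inverse (seq_to_fls ((gauss_map ^^ Suc h) (frac_seq M)))"
  proof -
    have e: "(gauss_map ^^ Suc h) (frac_seq M) = gauss_map ((gauss_map ^^ h) (frac_seq M))" by simp
    show ?thesis unfolding e gauss_map_def[of "(gauss_map ^^ h) (frac_seq M)"] Suc.IH by (rule refl)
  qed
  finally show ?case .
qed

definition quot_degree :: "(nat \<Rightarrow> 'a::field) \<Rightarrow> nat" where
  "quot_degree x = degree (cf_int (inverse (seq_to_fls x)))"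

lemma degree_cf_quot_Suc: "degree (cf_quot M (Suc h)) = quot_degree ((gauss_map ^^ h) (frac_seq M))"
  by (simp only: cf_quot_def cf_rest_Suc_gauss_map quot_degree_def)

definition first_nz :: "(nat \<Rightarrow> 'a::zero) \<Rightarrow> nat" where
  "first_nz a = (LEAST i. a i \<noteq> 0)"

lemma first_nz_nonzero: "a \<noteq> (\<lambda>_. 0) \<Longrightarrow> a (first_nz a) \<noteq> 0"
  unfolding first_nz_def by (rule LeastI_ex) auto

lemma zero_before_first_nz: "i < first_nz a \<Longrightarrow> a i = 0"
  unfolding first_nz_def using not_less_Least by blast

lemma fls_subdegree_seq_to_fls:
  assumes "a \<noteq> (\<lambda>_. 0)"
  shows "fls_subdegree (seq_to_fls a) = int (first_nz a) + 1"
  by (rule fls_subdegree_eqI)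
    (use first_nz_nonzero[OF assms] zero_before_first_nz[of _ a] in \<open>auto simp: seq_to_fls_nth nat_add_distrib\<close>)

lemma quot_degree_eq: "quot_degree x = (if x = (\<lambda>_. 0) then 0 else first_nz x + 1)"
proof (cases "x = (\<lambda>_. 0)")
  case True then show ?thesis by (simp add: quot_degree_def cf_int_def)
next
  case False
  let ?M = "inverse (seq_to_fls x)"
  have sd: "fls_subdegree ?M = - (int (first_nz x) + 1)"
    using fls_subdegree_seq_to_fls[OF False] by simp
  have "degree (fls_prpart ?M) = first_nz x + 1" using sd by simp
  then have "degree (cf_int ?M) = first_nz x + 1" unfolding cf_int_def
    by (subst degree_add_eq_left) auto
  then show ?thesis using False by (simp add: quot_degree_def)
qed

lemma fps_inverse_nth_Suc: "inverse (f::'a::field fps) $ Suc n =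
   - inverse (f$0) * (\<Sum>i=1..Suc n. f$i * inverse f $ (Suc n - i))"
  by (simp add: fps_inverse_def)

lemma fps_inverse_nth_cong: "(\<forall>i\<le>m. (f::'a::field fps)$i = g$i) \<Longrightarrow> inverse f $ m = inverse g $ m"
proof (induction m rule: less_induct)
  case (less m)
  show ?case
  proof (cases m)
    case 0 then show ?thesis using less.prems by simp
  next
    case (Suc n)
    have "(\<Sum>i=1..Suc n. f$i * inverse f $ (Suc n - i)) = (\<Sum>i=1..Suc n. g$i * inverse g $ (Suc n - i))"
      using less.prems less.IH Suc by (intro sum.cong refl) auto
    then show ?thesis using Suc less.prems by (simp add: fps_inverse_nth_Suc)
  qed
qed

lemma fps_inverse_nth_perturb:
  assumes "\<forall>i<m. (f::'a::field fps)$i = g$i" "m \<ge> 1"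
  shows "inverse f $ m = inverse g $ m - (f$m - g$m) * inverse (f$0) ^ 2"
proof -
  obtain n where m: "m = Suc n" using assms(2) by (cases m) auto
  have f0: "f$0 = g$0" using assms m by auto
  have split: "\<And>h::nat\<Rightarrow>'a. (\<Sum>i=1..Suc n. h i) = (\<Sum>i=1..n. h i) + h (Suc n)" by simp
  have eq: "(\<Sum>i=1..n. f$i * inverse f $ (Suc n - i)) = (\<Sum>i=1..n. g$i * inverse g $ (Suc n - i))"
  proof (intro sum.cong refl)
    fix i assume i: "i \<in> {1..n}"
    have "inverse f $ (Suc n - i) = inverse g $ (Suc n - i)"
      by (rule fps_inverse_nth_cong) (use assms i m in auto)
    then show "f$i * inverse f $ (Suc n - i) = g$i * inverse g $ (Suc n - i)"
      using assms i m by auto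
  qed
  show ?thesis
    by (simp only: m fps_inverse_nth_Suc split eq f0) (simp add: f0 power2_eq_square algebra_simps)
qed

lemma gauss_map_eq:
  assumes "x \<noteq> (\<lambda>_. 0)"
  shows "gauss_map x n = inverse (Abs_fps (\<lambda>j. x (first_nz x + j))) $ (n + first_nz x + 2)"
proof -
  let ?L = "seq_to_fls x"
  have sd: "fls_subdegree ?L = int (first_nz x) + 1" by (rule fls_subdegree_seq_to_fls[OF assms])
  have bf: "fls_base_factor_to_fps ?L = Abs_fps (\<lambda>j. x (first_nz x + j))"
    by (rule fps_ext) (simp add: fls_base_factor_to_fps_nth sd seq_to_fls_nth nat_add_distrib add.commute)
  have "nat (int n + 1 + (int (first_nz x) + 1)) = n + first_nz x + 2" by simp
  then show ?thesis
    unfolding gauss_map_def frac_seq_def fls_inverse_def bf by (simp add: sd)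
qed

definition poly_mult_seq :: "'a::field poly \<Rightarrow> (nat \<Rightarrow> 'a) \<Rightarrow> nat \<Rightarrow> 'a" where
  "poly_mult_seq B a = frac_seq (poly_to_fls B * seq_to_fls a)"

lemma poly_mult_seq_eq: "poly_mult_seq B a n = (\<Sum>i\<le>degree B. coeff B i * a (n + i))"
proof -
  have "poly_to_fls B * seq_to_fls a = (\<Sum>i\<le>degree B. fls_const (coeff B i) * (fls_X_inv ^ i * seq_to_fls a))"
    unfolding poly_to_fls_def sum_distrib_right by (simp only: mult.assoc)
  then have "poly_mult_seq B a n = (\<Sum>i\<le>degree B. coeff B i * (fls_X_inv ^ i * seq_to_fls a) $$ (int n + 1))"
    by (simp only: poly_mult_seq_def frac_seq_def fls_nth_sum fls_mult_const_nth)
  also have "\<dots> = (\<Sum>i\<le>degree B. coeff B i * a (n + i))"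
    by (intro sum.cong refl)
      (simp only: fls_X_inv_power_times_conv_shift fls_shift_nth seq_to_fls_nth, simp add: nat_add_distrib)
  finally show ?thesis .
qed


section \<open>Haar measure on coefficient sequences\<close>

abbreviation uniform_coord where "uniform_coord \<equiv> measure_pmf (pmf_of_set (UNIV::'a::{field,finite} set))"

lemma space_haarH [simp]: "space (haarH :: (nat \<Rightarrow> 'a::{field,finite}) measure) = UNIV"
  by (simp add: haarH_def space_PiM)

lemma prob_space_haarH: "prob_space (haarH :: (nat \<Rightarrow> 'a::{field,finite}) measure)"
  unfolding haarH_def by (intro prob_space_PiM prob_space_measure_pmf)

definition seq_cylinder :: "'a list \<Rightarrow> (nat \<Rightarrow> 'a) set" where
  "seq_cylinder xs = {a. \<forall>i<length xs. a i = xs ! i}"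

definition seq_prefix :: "nat \<Rightarrow> (nat \<Rightarrow> 'a) \<Rightarrow> 'a list" where
  "seq_prefix n a = map a [0..<n]"

lemma length_seq_prefix [simp]: "length (seq_prefix n a) = n"
  by (simp add: seq_prefix_def)

lemma seq_cylinder_iff: "length xs = n \<Longrightarrow> a \<in> seq_cylinder xs \<longleftrightarrow> seq_prefix n a = xs"
proof
  assume l: "length xs = n" and "a \<in> seq_cylinder xs"
  then have "\<forall>i<n. a i = xs ! i" by (simp add: seq_cylinder_def)
  then show "seq_prefix n a = xs" using l by (intro nth_equalityI) (auto simp: seq_prefix_def)
next
  assume l: "length xs = n" and "seq_prefix n a = xs"
  then have "\<forall>i<n. xs ! i = a i" by (metis add_0 diff_zero length_upt nth_map nth_upt seq_prefix_def)
  then show "a \<in> seq_cylinder xs" using l by (auto simp: seq_cylinder_def)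
qed

lemma seq_prefix_eq_iff: "seq_prefix n a = seq_prefix n b \<longleftrightarrow> (\<forall>i<n. a i = b i)"
  by (auto simp: seq_prefix_def)

lemma seq_cylinder_prod_emb: "seq_cylinder xs = prod_emb UNIV (\<lambda>_. uniform_coord) {..<length xs} (PiE {..<length xs} (\<lambda>i. {xs ! i}))"
  by (simp add: set_eq_iff prod_emb_iff seq_cylinder_def restrict_PiE_iff Pi_iff Ball_def)

lemma seq_cylinder_sets [measurable]: "seq_cylinder xs \<in> sets (haarH :: (nat \<Rightarrow> 'a::{field,finite}) measure)"
  unfolding seq_cylinder_prod_emb haarH_def by (rule sets_PiM_I) auto

lemma emeasure_seq_cylinder: "emeasure (haarH :: (nat \<Rightarrow> 'a::{field,finite}) measure) (seq_cylinder xs)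
    = ennreal ((1 / real CARD('a)) ^ length xs)"
proof -
  have "emeasure (haarH :: (nat \<Rightarrow> 'a) measure) (seq_cylinder xs) = (\<Prod>i<length xs. emeasure uniform_coord {xs ! i})"
    unfolding seq_cylinder_prod_emb haarH_def
    by (rule emeasure_PiM_emb) (auto intro: prob_space_measure_pmf)
  also have "\<dots> = (\<Prod>i<length xs. ennreal (1 / real CARD('a)))"
    by (intro prod.cong refl) (simp add: emeasure_pmf_single)
  also have "\<dots> = ennreal ((1 / real CARD('a)) ^ length xs)"
    by (simp add: ennreal_power)
  finally show ?thesis .
qed

lemma seq_prefix_vimage_eq: "S \<subseteq> {xs. length xs = n} \<Longrightarrow> {a. seq_prefix n a \<in> S} = (\<Union>xs\<in>S. seq_cylinder xs)"
  using seq_cylinder_iff by fastforce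

lemma finite_lists_length: "finite {xs::'a::finite list. length xs = n}"
  using finite_lists_length_eq[of "UNIV::'a set" n] by simp

lemma emeasure_vimage_seq_prefix:
  fixes F :: "(nat \<Rightarrow> 'a::{field,finite}) \<Rightarrow> nat \<Rightarrow> 'a"
  assumes F: "F \<in> measurable haarH haarH"
    and cyl: "\<And>xs. emeasure haarH (F -` seq_cylinder xs) = ennreal ((1 / real CARD('a)) ^ length xs)"
    and S: "S \<subseteq> {xs. length xs = n}"
  shows "emeasure haarH (F -` {a. seq_prefix n a \<in> S}) = of_nat (card S) * ennreal ((1 / real CARD('a)) ^ n)"
proof -
  have fin: "finite S" using S finite_subset finite_lists_length by blast
  have disj: "disjoint_family_on (\<lambda>xs. F -` seq_cylinder xs) S"
  proof (unfold disjoint_family_on_def, intro ballI impI)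
    fix m m' assume m: "m \<in> S" "m' \<in> S" "m \<noteq> m'"
    then have lens: "length m = n" "length m' = n" using S by auto
    show "F -` seq_cylinder m \<inter> F -` seq_cylinder m' = {}"
    proof (rule equals0I)
      fix x assume "x \<in> F -` seq_cylinder m \<inter> F -` seq_cylinder m'"
      then have "seq_prefix n (F x) = m" "seq_prefix n (F x) = m'"
        using seq_cylinder_iff[OF lens(1)] seq_cylinder_iff[OF lens(2)] by auto
      then show False using m by simp
    qed
  qed
  have "F -` {a. seq_prefix n a \<in> S} = (\<Union>xs\<in>S. F -` seq_cylinder xs)"
    unfolding seq_prefix_vimage_eq[OF S] by auto
  also have "emeasure haarH \<dots> = (\<Sum>xs\<in>S. emeasure haarH (F -` seq_cylinder xs))"
    using measurable_sets[OF F seq_cylinder_sets] by (intro sum_emeasure[symmetric] fin disj) auto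
  also have "\<dots> = (\<Sum>xs\<in>S. ennreal ((1 / real CARD('a)) ^ n))"
    by (intro sum.cong refl) (use S in \<open>auto simp: cyl\<close>)
  finally show ?thesis by simp
qed

lemma emeasure_seq_prefix_vimage:
  assumes "S \<subseteq> {xs. length xs = n}"
  shows "emeasure (haarH :: (nat \<Rightarrow> 'a::{field,finite}) measure) {a. seq_prefix n a \<in> S}
     = of_nat (card S) * ennreal ((1 / real CARD('a)) ^ n)"
proof -
  have "emeasure haarH ((\<lambda>x. x) -` {a. seq_prefix n a \<in> S})
      = of_nat (card S) * ennreal ((1 / real CARD('a)) ^ n)"
    by (rule emeasure_vimage_seq_prefix[OF measurable_id _ assms]) (simp add: emeasure_seq_cylinder)
  then show ?thesis by simp
qed

lemma seq_prefix_vimage_sets [measurable]: "{a. seq_prefix n a \<in> S} \<in> sets (haarH :: (nat \<Rightarrow> 'a::{field,finite}) measure)"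
proof -
  have "{a. seq_prefix n a \<in> S} = {a. seq_prefix n a \<in> S \<inter> {xs. length xs = n}}" by auto
  also have "\<dots> = (\<Union>xs\<in>S \<inter> {xs. length xs = n}. seq_cylinder xs)" by (rule seq_prefix_vimage_eq) auto
  also have "\<dots> \<in> sets haarH"
    by (intro sets.finite_UN) (auto intro: finite_subset[OF _ finite_lists_length])
  finally show ?thesis .
qed


text \<open>Each constraint fixes the value of a bijective function of one new coordinate, so every
  admissible prefix has exactly one admissible extension.\<close>
lemma card_triangular_lists:
  fixes g :: "nat \<Rightarrow> 'a::finite list \<Rightarrow> 'a"
  assumes P: "P \<subseteq> {xs. length xs = k}"
  assumes bij: "\<And>n xs. length xs = k + n \<Longrightarrow> take k xs \<in> P \<Longrightarrow> bij (\<lambda>v. g n (xs @ [v]))"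
  shows "card {xs. length xs = k + N \<and> take k xs \<in> P \<and> (\<forall>n<N. g n (take (k+n+1) xs) = c n)} = card P"
proof (induction N)
  case 0
  have "{xs. length xs = k + 0 \<and> take k xs \<in> P \<and> (\<forall>n<0. g n (take (k+n+1) xs) = c n)} = P"
    using P by auto
  then show ?case by simp
next
  case (Suc N)
  define S where "S = {xs. length xs = k + N \<and> take k xs \<in> P \<and> (\<forall>n<N. g n (take (k+n+1) xs) = c n)}"
  define S' where "S' = {xs. length xs = k + Suc N \<and> take k xs \<in> P \<and> (\<forall>n<Suc N. g n (take (k+n+1) xs) = c n)}"
  have bb: "bij_betw butlast S' S"
  proof (rule bij_betw_imageI)
    show "inj_on butlast S'"
    proof (rule inj_onI)
      fix xs ys assume xs: "xs \<in> S'" and ys: "ys \<in> S'" and e: "butlast xs = butlast ys"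
      have nx: "xs \<noteq> []" and ny: "ys \<noteq> []" using xs ys by (auto simp: S'_def)
      have lx: "length (butlast xs) = k + N" using xs by (simp add: S'_def)
      have tk: "take k (butlast xs) \<in> P" using xs by (simp add: S'_def take_butlast)
      have gx: "g N (butlast xs @ [last xs]) = c N" using xs nx by (auto simp: S'_def)
      have gy: "g N (butlast xs @ [last ys]) = c N" using ys ny e by (auto simp: S'_def)
      have "last xs = last ys" using bij[OF lx tk] gx gy unfolding bij_def inj_def by metis
      then show "xs = ys" using e nx ny by (metis append_butlast_last_id)
    qed
  next
    show "butlast ` S' = S"
    proof
      show "butlast ` S' \<subseteq> S"
      proof
        fix ys assume "ys \<in> butlast ` S'"
        then obtain xs where xs: "xs \<in> S'" and ys: "ys = butlast xs" by auto
        have "\<forall>n<N. take (k+n+1) (butlast xs) = take (k+n+1) xs"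
          using xs by (auto simp: S'_def take_butlast)
        then show "ys \<in> S" using xs ys by (auto simp: S'_def S_def take_butlast)
      qed
    next
      show "S \<subseteq> butlast ` S'"
      proof
        fix ys assume ys: "ys \<in> S"
        have l: "length ys = k + N" and tk: "take k ys \<in> P" using ys by (auto simp: S_def)
        from bij[OF l tk] obtain v where v: "g N (ys @ [v]) = c N" unfolding bij_def surj_def by metis
        have "ys @ [v] \<in> S'"
        proof -
          have "\<forall>n<N. take (k+n+1) (ys @ [v]) = take (k+n+1) ys" using l by auto
          moreover have "take (k+N+1) (ys @ [v]) = ys @ [v]" using l by auto
          ultimately show ?thesis using ys v l by (auto simp: S_def S'_def less_Suc_eq)
        qed
        then show "ys \<in> butlast ` S'" by (metis butlast_snoc image_eqI)
      qed
    qed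
  qed
  then have "card S' = card S" by (rule bij_betw_same_card)
  then show ?case using Suc.IH by (simp add: S_def S'_def)
qed


definition list_to_seq :: "'a list \<Rightarrow> nat \<Rightarrow> 'a" where
  "list_to_seq xs = (\<lambda>i. if i < length xs then xs ! i else undefined)"

lemma seq_prefix_list_to_seq: "m \<le> length xs \<Longrightarrow> seq_prefix m (list_to_seq xs) = take m xs"
  by (auto simp: seq_prefix_def list_to_seq_def intro: nth_equalityI)

lemma take_seq_prefix: "m \<le> n \<Longrightarrow> take m (seq_prefix n a) = seq_prefix m a"
  by (simp add: seq_prefix_def take_map)

lemma bij_list_to_seq_last:
  fixes \<Phi> :: "nat \<Rightarrow> (nat \<Rightarrow> 'a::finite) \<Rightarrow> 'a"
  assumes dep: "\<And>n a b. seq_prefix k a \<in> P \<Longrightarrow> seq_prefix (k+n+1) a = seq_prefix (k+n+1) b \<Longrightarrow> \<Phi> n a = \<Phi> n b"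
    and inj: "\<And>n a. seq_prefix k a \<in> P \<Longrightarrow> inj (\<lambda>v. \<Phi> n (a(k+n := v)))"
    and xs: "length xs = k + n" "take k xs \<in> P"
  shows "bij (\<lambda>v. \<Phi> n (list_to_seq (xs @ [v])))"
proof -
  define a0 where "a0 = list_to_seq (xs @ [undefined])"
  have prefix: "seq_prefix k (a0(k+n := v)) \<in> P" for v
  proof -
    have "seq_prefix k (a0(k+n := v)) = seq_prefix k a0" by (auto simp: seq_prefix_def)
    also have "\<dots> = take k xs" unfolding a0_def using xs by (simp add: seq_prefix_list_to_seq)
    finally show ?thesis using xs by simp
  qed
  have eq: "\<Phi> n (list_to_seq (xs @ [v])) = \<Phi> n (a0(k+n := v))" for v
  proof -
    have "seq_prefix (k+n+1) (a0(k+n := v)) = seq_prefix (k+n+1) (list_to_seq (xs @ [v]))"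
      using xs by (auto simp: seq_prefix_def a0_def list_to_seq_def nth_append)
    then show ?thesis using dep[OF prefix] by metis
  qed
  have "inj (\<lambda>v. \<Phi> n ((a0(k+n := undefined))(k+n := v)))" by (rule inj) (rule prefix)
  then have "inj (\<lambda>v. \<Phi> n (list_to_seq (xs @ [v])))" unfolding eq by simp
  then show ?thesis using finite_UNIV_inj_surj[of "\<lambda>v. \<Phi> n (list_to_seq (xs @ [v]))"] by (simp add: bij_def)
qed

lemma emeasure_triangular_constraints:
  fixes \<Phi> :: "nat \<Rightarrow> (nat \<Rightarrow> 'a::{field,finite}) \<Rightarrow> 'a"
  assumes P: "P \<subseteq> {xs. length xs = k}"
  assumes dep: "\<And>n a b. seq_prefix k a \<in> P \<Longrightarrow> seq_prefix (k+n+1) a = seq_prefix (k+n+1) b \<Longrightarrow> \<Phi> n a = \<Phi> n b"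
  assumes inj: "\<And>n a. seq_prefix k a \<in> P \<Longrightarrow> inj (\<lambda>v. \<Phi> n (a(k+n := v)))"
  shows "emeasure (haarH :: (nat \<Rightarrow> 'a) measure) {a. seq_prefix k a \<in> P \<and> (\<forall>n<N. \<Phi> n a = c n)}
     = emeasure haarH {a. seq_prefix k a \<in> P} * ennreal ((1 / real CARD('a)) ^ N)"
proof -
  define S where "S = {xs. length xs = k + N \<and> take k xs \<in> P \<and>
    (\<forall>n<N. \<Phi> n (list_to_seq (take (k+n+1) xs)) = c n)}"
  have card_S: "card S = card P"
    unfolding S_def
    by (rule card_triangular_lists[where g = "\<lambda>n xs. \<Phi> n (list_to_seq xs)", OF P bij_list_to_seq_last[OF dep inj]])
  have "\<Phi> n (list_to_seq (take (k+n+1) (seq_prefix (k+N) a))) = \<Phi> n a"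
    if "seq_prefix k a \<in> P" "n < N" for a n
    using dep[of a n "list_to_seq (seq_prefix (k+n+1) a)"] that
    by (simp add: take_seq_prefix seq_prefix_list_to_seq)
  then have set_eq: "{a. seq_prefix k a \<in> P \<and> (\<forall>n<N. \<Phi> n a = c n)} = {a. seq_prefix (k+N) a \<in> S}"
    by (auto simp: S_def take_seq_prefix)
  have "emeasure (haarH :: (nat \<Rightarrow> 'a) measure) {a. seq_prefix (k+N) a \<in> S}
      = of_nat (card S) * ennreal ((1 / real CARD('a)) ^ (k+N))"
    by (rule emeasure_seq_prefix_vimage) (auto simp: S_def)
  also have "\<dots> = (of_nat (card P) * ennreal ((1 / real CARD('a)) ^ k)) * ennreal ((1 / real CARD('a)) ^ N)"
    by (simp add: card_S power_add ennreal_mult mult.assoc)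
  also have "of_nat (card P) * ennreal ((1 / real CARD('a)) ^ k) = emeasure (haarH :: (nat \<Rightarrow> 'a) measure) {a. seq_prefix k a \<in> P}"
    by (rule emeasure_seq_prefix_vimage[symmetric, OF P])
  finally show ?thesis unfolding set_eq .
qed

lemma haarH_singleton_sets: "{x} \<in> sets (haarH :: (nat \<Rightarrow> 'a::{field,finite}) measure)"
proof -
  have "{x} = (\<Inter>m. seq_cylinder (seq_prefix m x))"
  proof (intro set_eqI iffI)
    fix a assume "a \<in> (\<Inter>m. seq_cylinder (seq_prefix m x))"
    then have "seq_prefix (Suc i) a = seq_prefix (Suc i) x" for i using seq_cylinder_iff[of "seq_prefix (Suc i) x" "Suc i" a] by auto
    then have "a i = x i" for i by (auto simp: seq_prefix_eq_iff)
    then show "a \<in> {x}" by auto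
  qed (auto simp: seq_cylinder_iff)
  also have "\<dots> \<in> sets haarH" by (intro sets.countable_INT) auto
  finally show ?thesis .
qed

lemma haarH_countable_sets: "countable C \<Longrightarrow> C \<in> sets (haarH :: (nat \<Rightarrow> 'a::{field,finite}) measure)"
proof -
  assume C: "countable C"
  have "C = (\<Union>x\<in>C. {x})" by auto
  also have "\<dots> \<in> sets haarH" by (intro sets.countable_UN'' C haarH_singleton_sets)
  finally show ?thesis .
qed

lemma measurable_locally_constant:
  fixes g :: "(nat \<Rightarrow> 'a::{field,finite}) \<Rightarrow> 'b"
  assumes C: "countable C"
  assumes lc: "\<And>a. a \<notin> C \<Longrightarrow> \<exists>m. \<forall>b. seq_prefix m b = seq_prefix m a \<longrightarrow> g b = g a"
  shows "g \<in> measurable haarH (count_space UNIV)"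
proof (rule measurableI)
  fix A :: "'b set"
  define L where "L = {xs. seq_cylinder xs \<subseteq> g -` A}"
  have sub: "g -` A \<subseteq> (\<Union>xs\<in>L. seq_cylinder xs) \<union> (C \<inter> g -` A)"
  proof
    fix a assume a: "a \<in> g -` A"
    show "a \<in> (\<Union>xs\<in>L. seq_cylinder xs) \<union> (C \<inter> g -` A)"
    proof (cases "a \<in> C")
      case True then show ?thesis using a by blast
    next
      case False
      then obtain m where m: "\<forall>b. seq_prefix m b = seq_prefix m a \<longrightarrow> g b = g a" using lc by blast
      have "seq_cylinder (seq_prefix m a) \<subseteq> g -` A"
      proof
        fix b assume "b \<in> seq_cylinder (seq_prefix m a)"
        then have "seq_prefix m b = seq_prefix m a" using seq_cylinder_iff[of "seq_prefix m a" m b] by simp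
        then have "g b = g a" using m by blast
        then show "b \<in> g -` A" using a by simp
      qed
      then have "seq_prefix m a \<in> L" by (simp add: L_def)
      moreover have "a \<in> seq_cylinder (seq_prefix m a)" using seq_cylinder_iff[of "seq_prefix m a" m a] by simp
      ultimately show ?thesis by blast
    qed
  qed
  have sup: "(\<Union>xs\<in>L. seq_cylinder xs) \<union> (C \<inter> g -` A) \<subseteq> g -` A" by (auto simp: L_def)
  have "g -` A \<inter> space haarH = (\<Union>xs\<in>L. seq_cylinder xs) \<union> (C \<inter> g -` A)"
    using equalityI[OF sub sup] by simp
  also have "\<dots> \<in> sets haarH"
  proof (rule sets.Un)
    show "(\<Union>xs\<in>L. seq_cylinder xs) \<in> sets haarH"
      by (rule sets.countable_UN'') (auto intro: countable_subset[OF subset_UNIV countableI_type])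
    show "C \<inter> g -` A \<in> sets haarH" by (rule haarH_countable_sets) (rule countable_subset[OF _ C], blast)
  qed
  finally show "g -` A \<inter> space haarH \<in> sets haarH" .
qed simp

lemma measurable_haarH_coordinatewise:
  fixes F :: "(nat \<Rightarrow> 'a::{field,finite}) \<Rightarrow> (nat \<Rightarrow> 'a)"
  assumes "\<And>n. (\<lambda>a. F a n) \<in> measurable haarH (count_space UNIV)"
  shows "F \<in> measurable haarH haarH"
proof -
  have "(\<lambda>a n. F a n) \<in> measurable haarH (PiM UNIV (\<lambda>_. uniform_coord))"
    by (rule measurable_PiM_single') (use assms in \<open>auto simp: measurable_cong_sets\<close>)
  then show ?thesis by (simp add: haarH_def)
qed

lemma prod_emb_eq_seq_prefix_vimage:
  fixes A :: "nat \<Rightarrow> 'a::{field,finite} set"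
  assumes "\<forall>j\<in>J. j < n"
  shows "prod_emb UNIV (\<lambda>_. uniform_coord) J (PiE J A)
    = {a. seq_prefix n a \<in> {xs. length xs = n \<and> (\<forall>j\<in>J. xs ! j \<in> A j)}}"
  using assms by (auto simp: prod_emb_iff restrict_PiE_iff Pi_iff seq_prefix_def)

lemma distr_haarH_eqI:
  fixes F :: "(nat \<Rightarrow> 'a::{field,finite}) \<Rightarrow> (nat \<Rightarrow> 'a)"
  assumes F: "F \<in> measurable haarH haarH"
  assumes cyl: "\<And>xs. emeasure haarH (F -` seq_cylinder xs) = ennreal ((1 / real CARD('a)) ^ length xs)"
  shows "distr haarH haarH F = haarH"
proof (rule measure_eqI_PiM_infinite)
  show "sets (distr haarH haarH F) = sets (PiM UNIV (\<lambda>_. uniform_coord))" by (simp add: haarH_def)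
  show "sets haarH = sets (PiM UNIV (\<lambda>_. uniform_coord :: 'a measure))" by (simp add: haarH_def)
  interpret prob_space haarH by (rule prob_space_haarH)
  show "finite_measure (distr haarH haarH F)"
    using prob_space_distr[OF F] by (rule prob_space.finite_measure)
  fix A :: "nat \<Rightarrow> 'a set" and J :: "nat set"
  assume J: "finite J"
  define n where "n = (if J = {} then 0 else Suc (Max J))"
  define S where "S = {xs. length xs = n \<and> (\<forall>j\<in>J. xs ! j \<in> A j)}"
  have X: "prod_emb UNIV (\<lambda>_. uniform_coord) J (PiE J A) = {a. seq_prefix n a \<in> S}"
    unfolding S_def using J
    by (intro prod_emb_eq_seq_prefix_vimage) (auto simp: n_def le_imp_less_Suc)
  have S: "S \<subseteq> {xs. length xs = n}" by (auto simp: S_def)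
  have "emeasure haarH (F -` {a. seq_prefix n a \<in> S}) = emeasure haarH {a. seq_prefix n a \<in> S}"
    using emeasure_vimage_seq_prefix[OF F cyl S] emeasure_seq_prefix_vimage[OF S] by simp
  then show "emeasure (distr haarH haarH F) (prod_emb UNIV (\<lambda>_. uniform_coord) J (PiE J A)) =
        emeasure haarH (prod_emb UNIV (\<lambda>_. uniform_coord) J (PiE J A))"
    unfolding X by (subst emeasure_distr[OF F]) auto
qed


section \<open>Invariance of Haar measure\<close>

lemma card_field_ge_2: "CARD('a::{field,finite}) \<ge> 2"
proof -
  have "{0::'a, 1} \<subseteq> UNIV" by simp
  then have "card {0::'a, 1} \<le> CARD('a)" by (rule card_mono[rotated]) simp
  then show ?thesis by simp
qed

lemma haarH_singleton_null: "{x} \<in> null_sets (haarH :: (nat \<Rightarrow> 'a::{field,finite}) measure)"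
proof -
  interpret prob_space "haarH :: (nat \<Rightarrow> 'a) measure" by (rule prob_space_haarH)
  let ?q = "1 / real CARD('a)"
  have q: "0 < ?q" "?q < 1" using card_field_ge_2[where 'a='a] by auto
  have le: "measure haarH {x} \<le> ?q ^ m" for m
  proof -
    have "{x} \<subseteq> seq_cylinder (seq_prefix m x)" using seq_cylinder_iff[of "seq_prefix m x" m x] by simp
    then have "measure haarH {x} \<le> measure haarH (seq_cylinder (seq_prefix m x))"
      by (intro finite_measure_mono) auto
    also have "\<dots> = ?q ^ m" using emeasure_seq_cylinder[of "seq_prefix m x"] q
      by (simp add: measure_def)
    finally show ?thesis .
  qed
  have "measure haarH {x} \<le> 0"
  proof (rule field_le_epsilon)
    fix e :: real assume "0 < e"
    then obtain m where "?q ^ m < e" using real_arch_pow_inv q by blast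
    then show "measure haarH {x} \<le> 0 + e" using le[of m] by simp
  qed
  then have "measure haarH {x} = 0" by (simp add: measure_le_0_iff)
  then show ?thesis using haarH_singleton_sets[of x] by (intro null_setsI) (auto simp: emeasure_eq_measure)
qed

lemma haarH_countable_null: "countable C \<Longrightarrow> C \<in> null_sets (haarH :: (nat \<Rightarrow> 'a::{field,finite}) measure)"
proof -
  assume C: "countable C"
  have "C = (\<Union>x\<in>C. {x})" by auto
  also have "\<dots> \<in> null_sets haarH" by (intro null_sets_UN' C haarH_singleton_null)
  finally show ?thesis .
qed

definition first_nz_at :: "nat \<Rightarrow> (nat \<Rightarrow> 'a::zero) set" where
  "first_nz_at w = {x. (\<forall>i<w. x i = 0) \<and> x w \<noteq> 0}"

lemma first_nz_atD: "x \<in> first_nz_at w \<Longrightarrow> x \<noteq> (\<lambda>_. 0) \<and> first_nz x = w"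
proof -
  assume x: "x \<in> first_nz_at w"
  then have nz: "x \<noteq> (\<lambda>_. 0)" by (auto simp: first_nz_at_def)
  have "first_nz x = w" unfolding first_nz_def
    by (rule Least_equality) (use x in \<open>auto simp: first_nz_at_def not_less[symmetric]\<close>)
  with nz show ?thesis by simp
qed

lemma in_first_nz_at: "x \<noteq> (\<lambda>_. 0) \<Longrightarrow> x \<in> first_nz_at (first_nz x)"
  using first_nz_nonzero[of x] zero_before_first_nz[of _ x] by (auto simp: first_nz_at_def)

definition first_nz_at_prefixes :: "nat \<Rightarrow> 'a::zero list set" where
  "first_nz_at_prefixes w = {xs. length xs = 2*w+2 \<and> (\<forall>i<w. xs ! i = 0) \<and> xs ! w \<noteq> 0}"

lemma seq_prefix_in_first_nz_at_prefixes: "seq_prefix (2*w+2) x \<in> first_nz_at_prefixes w \<longleftrightarrow> x \<in> first_nz_at w"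
  by (auto simp: first_nz_at_prefixes_def first_nz_at_def seq_prefix_def nth_append)

text \<open>If x has exactly w leading zeros, then 1/x is X^(w+1) times the inverse of the power series
  x_w + x_(w+1) X^-1 + ..., so the n-th coefficient of its fractional part depends only on
  x_0, ..., x_(2w+n+2), and affinely on the last one with slope -1/x_w^2.\<close>
lemma gauss_map_prefix_cong:
  assumes x: "x \<in> first_nz_at w" and e: "seq_prefix (2*w+2+n+1) x = seq_prefix (2*w+2+n+1) y"
  shows "gauss_map x n = gauss_map y n"
proof -
  have ex: "\<forall>i<2*w+2+n+1. x i = y i" using e by (simp add: seq_prefix_eq_iff)
  have y: "y \<in> first_nz_at w" using x ex by (auto simp: first_nz_at_def)
  from first_nz_atD[OF x] first_nz_atD[OF y]
  have fx: "first_nz x = w" "x \<noteq> (\<lambda>_. 0)" and fy: "first_nz y = w" "y \<noteq> (\<lambda>_. 0)" by auto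
  have "inverse (Abs_fps (\<lambda>j. x (w + j))) $ (n + w + 2) = inverse (Abs_fps (\<lambda>j. y (w + j))) $ (n + w + 2)"
    by (rule fps_inverse_nth_cong) (use ex in auto)
  then show ?thesis using gauss_map_eq[OF fx(2), of n] gauss_map_eq[OF fy(2), of n] fx fy by simp
qed

lemma gauss_map_inj_coord:
  assumes x: "x \<in> first_nz_at w"
  shows "inj (\<lambda>v. gauss_map (x(2*w+2+n := v)) n)"
proof (rule injI)
  fix v v' assume eq: "gauss_map (x(2*w+2+n := v)) n = gauss_map (x(2*w+2+n := v')) n"
  have W: "x(2*w+2+n := u) \<in> first_nz_at w" for u using x by (auto simp: first_nz_at_def)
  from first_nz_atD[OF W]
  have f: "first_nz (x(2*w+2+n := u)) = w" "x(2*w+2+n := u) \<noteq> (\<lambda>_. 0)" for u by auto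
  define fv where "fv u = Abs_fps (\<lambda>j. (x(2*w+2+n := u)) (w + j))" for u
  have G: "gauss_map (x(2*w+2+n := u)) n = inverse (fv u) $ (n + w + 2)" for u
    using gauss_map_eq[OF f(2)[of u], where n = n] unfolding f(1) fv_def .
  have "inverse (fv v) $ (n + w + 2)
      = inverse (fv v') $ (n + w + 2) - (fv v $ (n+w+2) - fv v' $ (n+w+2)) * inverse (fv v $ 0) ^ 2"
    by (rule fps_inverse_nth_perturb) (auto simp: fv_def)
  moreover have "fv v $ (n+w+2) = v" "fv v' $ (n+w+2) = v'" by (simp_all add: fv_def)
  moreover have "fv v $ 0 = x w" using x by (simp add: fv_def)
  moreover have "x w \<noteq> 0" using x by (simp add: first_nz_at_def)
  ultimately show "v = v'" using eq G by simp
qed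

lemma poly_mult_seq_prefix_cong:
  assumes e: "seq_prefix (degree B + n + 1) x = seq_prefix (degree B + n + 1) y"
  shows "poly_mult_seq B x n = poly_mult_seq B y n"
proof -
  have ex: "\<forall>i<degree B + n + 1. x i = y i" using e by (simp add: seq_prefix_eq_iff)
  show ?thesis unfolding poly_mult_seq_eq by (intro sum.cong refl) (use ex in auto)
qed

lemma poly_mult_seq_inj_coord:
  assumes B: "lead_coeff B = 1"
  shows "inj (\<lambda>v. poly_mult_seq B (x(degree B + n := v)) n)"
proof -
  have "poly_mult_seq B (x(degree B + n := v)) n = (\<Sum>i<degree B. coeff B i * x (n + i)) + v" for v
  proof -
    have "poly_mult_seq B (x(degree B + n := v)) n = (\<Sum>i<degree B. coeff B i * (x(degree B + n := v)) (n + i)) + coeff B (degree B) * v"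
      unfolding poly_mult_seq_eq by (simp add: lessThan_Suc_atMost[symmetric] add.commute)
    also have "(\<Sum>i<degree B. coeff B i * (x(degree B + n := v)) (n + i)) = (\<Sum>i<degree B. coeff B i * x (n + i))"
      by (intro sum.cong refl) auto
    also have "coeff B (degree B) * v = v" using B by simp
    finally show ?thesis .
  qed
  then show ?thesis by (auto intro: injI)
qed


lemma gauss_map_measurable: "gauss_map \<in> measurable (haarH :: (nat \<Rightarrow> 'a::{field,finite}) measure) haarH"
proof (rule measurable_haarH_coordinatewise)
  fix n
  show "(\<lambda>a. gauss_map a n) \<in> measurable (haarH :: (nat \<Rightarrow> 'a) measure) (count_space UNIV)"
  proof (rule measurable_locally_constant[where C = "{\<lambda>_. 0}"])
    fix a :: "nat \<Rightarrow> 'a" assume "a \<notin> {\<lambda>_. 0}"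
    then have a: "a \<in> first_nz_at (first_nz a)" by (intro in_first_nz_at) auto
    show "\<exists>m. \<forall>b. seq_prefix m b = seq_prefix m a \<longrightarrow> gauss_map b n = gauss_map a n"
      using gauss_map_prefix_cong[OF a] by metis
  qed simp
qed

lemma poly_mult_seq_measurable: "poly_mult_seq B \<in> measurable (haarH :: (nat \<Rightarrow> 'a::{field,finite}) measure) haarH"
proof (rule measurable_haarH_coordinatewise)
  fix n
  show "(\<lambda>a. poly_mult_seq B a n) \<in> measurable (haarH :: (nat \<Rightarrow> 'a) measure) (count_space UNIV)"
  proof (rule measurable_locally_constant[where C = "{}"])
    fix a :: "nat \<Rightarrow> 'a"
    show "\<exists>m. \<forall>b. seq_prefix m b = seq_prefix m a \<longrightarrow> poly_mult_seq B b n = poly_mult_seq B a n"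
      using poly_mult_seq_prefix_cong by metis
  qed simp
qed

lemma first_nz_at_sets: "first_nz_at w \<in> sets (haarH :: (nat \<Rightarrow> 'a::{field,finite}) measure)"
proof -
  have "first_nz_at w = {a::nat \<Rightarrow> 'a. seq_prefix (2*w+2) a \<in> first_nz_at_prefixes w}" using seq_prefix_in_first_nz_at_prefixes by blast
  then show ?thesis using seq_prefix_vimage_sets by metis
qed

lemma disjoint_first_nz_at: "disjoint_family (first_nz_at :: nat \<Rightarrow> (nat \<Rightarrow> 'a::zero) set)"
  unfolding disjoint_family_on_def using first_nz_atD by blast

lemma emeasure_eq_suminf_first_nz_at:
  assumes E: "E \<in> sets (haarH :: (nat \<Rightarrow> 'a::{field,finite}) measure)"
  shows "emeasure haarH E = (\<Sum>w. emeasure haarH (first_nz_at w \<inter> E))"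
proof -
  have split: "E = (\<Union>w. first_nz_at w \<inter> E) \<union> (E \<inter> {\<lambda>_. 0})" using in_first_nz_at by blast
  have null: "E \<inter> {\<lambda>_. 0} \<in> null_sets haarH"
    by (rule haarH_countable_null) (auto intro: countable_subset[of _ "{\<lambda>_. 0}"])
  have "emeasure haarH E = emeasure haarH (\<Union>w. first_nz_at w \<inter> E)"
    by (subst split, rule emeasure_Un_null_set[OF _ null]) (use first_nz_at_sets E in auto)
  also have "\<dots> = (\<Sum>w. emeasure haarH (first_nz_at w \<inter> E))"
  proof (rule suminf_emeasure[symmetric])
    show "range (\<lambda>w. first_nz_at w \<inter> E) \<subseteq> sets haarH" using first_nz_at_sets E by auto
    show "disjoint_family (\<lambda>w. first_nz_at w \<inter> E)"
      using disjoint_first_nz_at unfolding disjoint_family_on_def by blast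
  qed
  finally show ?thesis .
qed

lemma emeasure_first_nz_at_gauss_map_vimage:
  "emeasure (haarH :: (nat \<Rightarrow> 'a::{field,finite}) measure) (first_nz_at w \<inter> gauss_map -` seq_cylinder xs)
    = emeasure haarH (first_nz_at w :: (nat \<Rightarrow> 'a) set) * ennreal ((1 / real CARD('a)) ^ length xs)"
proof -
  have prefixes: "{a::nat \<Rightarrow> 'a. seq_prefix (2*w+2) a \<in> first_nz_at_prefixes w} = first_nz_at w"
    using seq_prefix_in_first_nz_at_prefixes by blast
  have "first_nz_at w \<inter> gauss_map -` seq_cylinder xs
      = {a. seq_prefix (2*w+2) a \<in> first_nz_at_prefixes w \<and> (\<forall>n<length xs. gauss_map a n = xs ! n)}"
    using seq_prefix_in_first_nz_at_prefixes by (auto simp: seq_cylinder_def)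
  also have "emeasure haarH \<dots> = emeasure haarH {a::nat \<Rightarrow> 'a. seq_prefix (2*w+2) a \<in> first_nz_at_prefixes w}
      * ennreal ((1 / real CARD('a)) ^ length xs)"
  proof (rule emeasure_triangular_constraints)
    show "first_nz_at_prefixes w \<subseteq> {xs. length xs = 2*w+2}" by (auto simp: first_nz_at_prefixes_def)
    fix n and a b :: "nat \<Rightarrow> 'a"
    assume "seq_prefix (2*w+2) a \<in> first_nz_at_prefixes w"
    then have a: "a \<in> first_nz_at w" using prefixes by blast
    show "seq_prefix (2*w+2+n+1) a = seq_prefix (2*w+2+n+1) b \<Longrightarrow> gauss_map a n = gauss_map b n"
      by (rule gauss_map_prefix_cong[OF a])
    show "inj (\<lambda>v. gauss_map (a(2*w+2+n := v)) n)" by (rule gauss_map_inj_coord[OF a])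
  qed
  finally show ?thesis unfolding prefixes .
qed

lemma emeasure_gauss_map_vimage_cylinder:
  "emeasure (haarH :: (nat \<Rightarrow> 'a::{field,finite}) measure) (gauss_map -` seq_cylinder xs)
    = ennreal ((1 / real CARD('a)) ^ length xs)"
proof -
  interpret prob_space "haarH :: (nat \<Rightarrow> 'a) measure" by (rule prob_space_haarH)
  have "gauss_map -` seq_cylinder xs \<in> sets haarH"
    using measurable_sets[OF gauss_map_measurable seq_cylinder_sets] by simp
  then have "emeasure haarH (gauss_map -` seq_cylinder xs)
      = (\<Sum>w. emeasure haarH (first_nz_at w :: (nat \<Rightarrow> 'a) set)) * ennreal ((1 / real CARD('a)) ^ length xs)"
    by (simp add: emeasure_eq_suminf_first_nz_at emeasure_first_nz_at_gauss_map_vimage)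
  also have "(\<Sum>w. emeasure haarH (first_nz_at w :: (nat \<Rightarrow> 'a) set)) = emeasure haarH (space (haarH :: (nat \<Rightarrow> 'a) measure))"
    by (subst emeasure_eq_suminf_first_nz_at[OF sets.top]) simp
  also have "\<dots> = 1" by (rule emeasure_space_1)
  finally show ?thesis by simp
qed

lemma emeasure_poly_mult_seq_vimage_cylinder:
  assumes B: "lead_coeff B = 1"
  shows "emeasure (haarH :: (nat \<Rightarrow> 'a::{field,finite}) measure) (poly_mult_seq B -` seq_cylinder xs)
    = ennreal ((1 / real CARD('a)) ^ length xs)"
proof -
  interpret prob_space "haarH :: (nat \<Rightarrow> 'a) measure" by (rule prob_space_haarH)
  let ?P = "{ys. length ys = degree B}"
  have "poly_mult_seq B -` seq_cylinder xs
      = {a. seq_prefix (degree B) a \<in> ?P \<and> (\<forall>n<length xs. poly_mult_seq B a n = xs ! n)}"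
    by (auto simp: seq_cylinder_def)
  also have "emeasure haarH \<dots>
      = emeasure haarH {a::nat \<Rightarrow> 'a. seq_prefix (degree B) a \<in> ?P} * ennreal ((1 / real CARD('a)) ^ length xs)"
  proof (rule emeasure_triangular_constraints)
    fix n and a b :: "nat \<Rightarrow> 'a"
    show "seq_prefix (degree B + n + 1) a = seq_prefix (degree B + n + 1) b \<Longrightarrow>
        poly_mult_seq B a n = poly_mult_seq B b n"
      by (rule poly_mult_seq_prefix_cong)
    show "inj (\<lambda>v. poly_mult_seq B (a(degree B + n := v)) n)" by (rule poly_mult_seq_inj_coord[OF B])
  qed simp
  finally show ?thesis using emeasure_space_1 by simp
qed

lemma distr_gauss_map: "distr (haarH :: (nat \<Rightarrow> 'a::{field,finite}) measure) haarH gauss_map = haarH"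
  by (rule distr_haarH_eqI[OF gauss_map_measurable emeasure_gauss_map_vimage_cylinder])

lemma distr_poly_mult_seq: "lead_coeff B = 1 \<Longrightarrow> distr (haarH :: (nat \<Rightarrow> 'a::{field,finite}) measure) haarH (poly_mult_seq B) = haarH"
  by (rule distr_haarH_eqI[OF poly_mult_seq_measurable emeasure_poly_mult_seq_vimage_cylinder])


section \<open>Large partial quotients\<close>

lemma quot_degree_measurable: "quot_degree \<in> measurable (haarH :: (nat \<Rightarrow> 'a::{field,finite}) measure) (count_space UNIV)"
proof (rule measurable_locally_constant[where C = "{\<lambda>_. 0}"])
  fix a :: "nat \<Rightarrow> 'a" assume "a \<notin> {\<lambda>_. 0}"
  then have a: "a \<in> first_nz_at (first_nz a)" by (intro in_first_nz_at) auto
  have "quot_degree b = quot_degree a" if "seq_prefix (first_nz a + 1) b = seq_prefix (first_nz a + 1) a" for b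
  proof -
    have "\<forall>i<first_nz a + 1. b i = a i" using that by (simp add: seq_prefix_eq_iff)
    then have "b \<in> first_nz_at (first_nz a)" using a by (auto simp: first_nz_at_def)
    then show ?thesis using first_nz_atD[OF a] first_nz_atD[of b] by (simp add: quot_degree_eq)
  qed
  then show "\<exists>m. \<forall>b. seq_prefix m b = seq_prefix m a \<longrightarrow> quot_degree b = quot_degree a" by blast
qed simp

lemma measurable_funpow: "T \<in> measurable M M \<Longrightarrow> (T ^^ h) \<in> measurable M M"
  by (induction h) (auto intro: measurable_compose)

lemma distr_funpow:
  assumes T: "T \<in> measurable M M" and inv: "distr M M T = M"
  shows "distr M M (T ^^ h) = M"
proof (induction h)
  case 0 then show ?case by (simp add: distr_id2)
next
  case (Suc h)
  have "distr M M (T ^^ Suc h) = distr (distr M M (T ^^ h)) M T"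
    unfolding funpow.simps(2) by (rule distr_distr[OF T measurable_funpow[OF T], symmetric])
  then show ?case by (simp only: Suc.IH inv)
qed

definition shifted_gauss_iter :: "'a::field poly \<Rightarrow> nat \<Rightarrow> (nat \<Rightarrow> 'a) \<Rightarrow> nat \<Rightarrow> 'a" where
  "shifted_gauss_iter B h a = (gauss_map ^^ h) (poly_mult_seq B a)"

lemma degree_cf_quot_Suc_mult:
  "degree (cf_quot (poly_to_fls B * seq_to_fls a) (Suc h)) = quot_degree (shifted_gauss_iter B h a)"
  by (simp add: degree_cf_quot_Suc poly_mult_seq_def[symmetric] shifted_gauss_iter_def)

lemma shifted_gauss_iter_measurable:
  "shifted_gauss_iter B h \<in> measurable (haarH :: (nat \<Rightarrow> 'a::{field,finite}) measure) haarH"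
  unfolding shifted_gauss_iter_def
  by (rule measurable_compose[OF poly_mult_seq_measurable measurable_funpow[OF gauss_map_measurable]])

lemma emeasure_shifted_gauss_iter_vimage:
  assumes B: "lead_coeff B = 1" and A: "A \<in> sets (haarH :: (nat \<Rightarrow> 'a::{field,finite}) measure)"
  shows "emeasure haarH (shifted_gauss_iter B h -` A) = emeasure haarH A"
proof -
  have "shifted_gauss_iter B h = (gauss_map ^^ h) \<circ> poly_mult_seq B"
    by (rule ext) (simp add: shifted_gauss_iter_def)
  then have "distr haarH haarH (shifted_gauss_iter B h)
      = distr (distr haarH haarH (poly_mult_seq B)) haarH (gauss_map ^^ h :: (nat \<Rightarrow> 'a) \<Rightarrow> _)"
    by (simp only: distr_distr[OF measurable_funpow[OF gauss_map_measurable] poly_mult_seq_measurable])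
  also have "\<dots> = haarH"
    by (simp only: distr_poly_mult_seq[OF B] distr_funpow[OF gauss_map_measurable distr_gauss_map])
  finally have invariant: "distr haarH haarH (shifted_gauss_iter B h) = (haarH :: (nat \<Rightarrow> 'a) measure)" .
  have "emeasure (distr haarH haarH (shifted_gauss_iter B h)) A = emeasure haarH (shifted_gauss_iter B h -` A)"
    by (subst emeasure_distr[OF shifted_gauss_iter_measurable A]) simp
  then show ?thesis unfolding invariant by simp
qed

lemma quot_degree_ge_subset: "{y. k \<le> quot_degree y} \<subseteq> seq_cylinder (replicate (k - 1) 0)"
proof
  fix y :: "nat \<Rightarrow> 'a" assume y: "y \<in> {y. k \<le> quot_degree y}"
  show "y \<in> seq_cylinder (replicate (k - 1) 0)"
  proof (cases "k = 0")
    case False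
    with y have "k - 1 \<le> first_nz y" by (auto simp: quot_degree_eq split: if_splits)
    then show ?thesis using zero_before_first_nz[of _ y] by (auto simp: seq_cylinder_def)
  qed (simp add: seq_cylinder_def)
qed

lemma emeasure_quot_degree_large_le:
  assumes X: "X > 0"
  shows "emeasure (haarH :: (nat \<Rightarrow> 'a::{field,finite}) measure) {y. X \<le> real CARD('a) ^ quot_degree y}
    \<le> ennreal (real CARD('a) / X)"
proof -
  let ?p = "real CARD('a)"
  have p2: "?p \<ge> 2" using card_field_ge_2[where 'a='a] by simp
  obtain k where k: "X \<le> ?p ^ k" and kmin: "\<And>d. d < k \<Longrightarrow> ?p ^ d < X"
    using exists_least_iff[of "\<lambda>k. X \<le> ?p ^ k"] real_arch_pow[of ?p X] p2
    by (metis less_imp_le not_le one_less_numeral_iff order_less_le_trans semiring_norm(76))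
  have "{y. X \<le> ?p ^ quot_degree y} \<subseteq> {y. k \<le> quot_degree y}"
    using kmin by (auto simp: not_less[symmetric])
  also note quot_degree_ge_subset
  finally have "emeasure (haarH :: (nat \<Rightarrow> 'a) measure) {y. X \<le> ?p ^ quot_degree y}
      \<le> emeasure (haarH :: (nat \<Rightarrow> 'a) measure) (seq_cylinder (replicate (k - 1) 0))"
    by (rule emeasure_mono[OF _ seq_cylinder_sets])
  also have "\<dots> = ennreal ((1 / ?p) ^ (k - 1))" by (simp add: emeasure_seq_cylinder)
  also have "(1 / ?p) ^ (k - 1) \<le> ?p / X"
  proof (cases "k = 0")
    case True
    then show ?thesis using k X p2 by (simp add: field_simps)
  next
    case False
    then have "(1 / ?p) ^ (k - 1) = ?p / ?p ^ k" using p2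
      by (cases k) (simp_all add: field_simps power_one_over)
    also have "\<dots> \<le> ?p / X" using k X p2 by (intro divide_left_mono) auto
    finally show ?thesis .
  qed
  finally show ?thesis by (simp add: ennreal_leI)
qed

definition large_quot :: "'a::{field,finite} poly \<Rightarrow> nat \<Rightarrow> real \<Rightarrow> (nat \<Rightarrow> 'a) set" where
  "large_quot B h X = {a. X \<le> real CARD('a) ^ quot_degree (shifted_gauss_iter B h a)}"

lemma large_quot_eq_vimage: "large_quot (B :: 'a::{field,finite} poly) h X = shifted_gauss_iter B h -` {y. X \<le> real CARD('a) ^ quot_degree y}"
  by (auto simp: large_quot_def)

lemma quot_degree_large_sets:
  "{y. X \<le> real CARD('a) ^ quot_degree y} \<in> sets (haarH :: (nat \<Rightarrow> 'a::{field,finite}) measure)"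
  using measurable_sets[OF quot_degree_measurable, of "{d. X \<le> real CARD('a) ^ d}"] by (simp add: vimage_def)

lemma large_quot_sets: "large_quot B h X \<in> sets (haarH :: (nat \<Rightarrow> 'a::{field,finite}) measure)"
  unfolding large_quot_eq_vimage
  using measurable_sets[OF shifted_gauss_iter_measurable quot_degree_large_sets] by simp

lemma emeasure_large_quot_le:
  assumes "lead_coeff B = 1" and "X > 0"
  shows "emeasure (haarH :: (nat \<Rightarrow> 'a::{field,finite}) measure) (large_quot B h X) \<le> ennreal (real CARD('a) / X)"
  unfolding large_quot_eq_vimage emeasure_shifted_gauss_iter_vimage[OF assms(1) quot_degree_large_sets]
  by (rule emeasure_quot_degree_large_le[OF assms(2)])


section \<open>The exceptional set\<close>

lemma seq_to_fls_inject: "seq_to_fls a = seq_to_fls b \<Longrightarrow> a = b"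
proof (rule ext)
  fix i assume "seq_to_fls a = seq_to_fls b"
  then have "seq_to_fls a $$ (int i + 1) = seq_to_fls b $$ (int i + 1)" by simp
  then show "a i = b i" by simp
qed

lemma poly_to_fls_nonzero: "Q \<noteq> 0 \<Longrightarrow> poly_to_fls Q \<noteq> (0::'a::field fls)"
proof
  assume Q: "Q \<noteq> 0" and "poly_to_fls Q = 0"
  then have "poly_to_fls Q $$ (- int (degree Q)) = 0" by simp
  then show False using Q by (simp add: poly_to_fls_nth)
qed

lemma countable_UNIV_poly: "countable (UNIV :: 'a::{zero,finite} poly set)"
proof (rule countable_image_inj_on)
  show "countable (coeffs ` (UNIV :: 'a poly set))" by (rule countable_subset[OF subset_UNIV countableI_type])
  show "inj_on coeffs (UNIV :: 'a poly set)" by (rule inj_onI) (simp add: coeffs_eq_iff)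
qed

lemma countable_rational_seqs: "countable {a :: nat \<Rightarrow> 'a::{field,finite}. is_rational_fls (seq_to_fls a)}"
proof -
  define S where "S PQ = {a :: nat \<Rightarrow> 'a. snd PQ \<noteq> 0 \<and> poly_to_fls (snd PQ) * seq_to_fls a = poly_to_fls (fst PQ)}" for PQ
  have sub: "{a :: nat \<Rightarrow> 'a. is_rational_fls (seq_to_fls a)} \<subseteq> (\<Union>PQ\<in>UNIV \<times> UNIV. S PQ)"
  proof
    fix a assume "a \<in> {a :: nat \<Rightarrow> 'a. is_rational_fls (seq_to_fls a)}"
    then obtain P Q where "Q \<noteq> 0" "poly_to_fls Q * seq_to_fls a = poly_to_fls P"
      unfolding is_rational_fls_def by blast
    then have "a \<in> S (P, Q)" by (simp add: S_def)
    then show "a \<in> (\<Union>PQ\<in>UNIV \<times> UNIV. S PQ)" by blast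
  qed
  have "countable (S PQ)" for PQ
  proof (cases "S PQ = {}")
    case False
    then obtain a where a: "a \<in> S PQ" by auto
    have "S PQ \<subseteq> {a}"
    proof
      fix b assume b: "b \<in> S PQ"
      have nz: "poly_to_fls (snd PQ) \<noteq> (0::'a fls)" using a by (intro poly_to_fls_nonzero) (simp add: S_def)
      have "poly_to_fls (snd PQ) * seq_to_fls b = poly_to_fls (snd PQ) * seq_to_fls a"
        using a b by (simp add: S_def)
      then have "seq_to_fls b = seq_to_fls a" using nz by (rule mult_left_cancel[THEN iffD1, rotated])
      then show "b \<in> {a}" using seq_to_fls_inject by auto
    qed
    then show ?thesis by (rule countable_subset) simp
  qed simp
  moreover have "countable ((UNIV :: 'a poly set) \<times> (UNIV :: 'a poly set))"
    by (intro countable_SIGMA countable_UNIV_poly)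
  ultimately have "countable (\<Union>PQ\<in>UNIV \<times> UNIV. S PQ)" by (intro countable_UN) blast+
  then show ?thesis by (rule countable_subset[OF sub])
qed

lemma emeasure_UN_countable_le:
  fixes X :: "'i \<Rightarrow> 'b set" and f :: "'i \<Rightarrow> real"
  assumes I: "countable I" and Xs: "\<And>i. i \<in> I \<Longrightarrow> X i \<in> sets M"
    and le: "\<And>i. i \<in> I \<Longrightarrow> emeasure M (X i) \<le> ennreal (f i)"
    and nn: "\<And>i. i \<in> I \<Longrightarrow> f i \<ge> 0"
    and S: "\<And>F. finite F \<Longrightarrow> F \<subseteq> I \<Longrightarrow> sum f F \<le> S"
  shows "emeasure M (\<Union>i\<in>I. X i) \<le> ennreal S"
proof (cases "I = {}")
  case True then show ?thesis by simp
next
  case False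
  define e where "e = from_nat_into I"
  have re: "range e = I" using False I by (simp add: e_def)
  define Y where "Y n = (\<Union>i\<in>e ` {..n}. X i)" for n
  have Ysets: "range Y \<subseteq> sets M" using re Xs unfolding Y_def by auto
  have inc: "incseq Y" unfolding incseq_def Y_def
  proof (intro allI impI)
    fix m n :: nat assume "m \<le> n"
    then show "(\<Union>i\<in>e ` {..m}. X i) \<subseteq> (\<Union>i\<in>e ` {..n}. X i)" by (intro UN_mono image_mono) auto
  qed
  have UY: "(\<Union>i\<in>I. X i) = (\<Union>n. Y n)" unfolding Y_def re[symmetric] by auto
  have "emeasure M (Y n) \<le> ennreal S" for n
  proof -
    have F: "finite (e ` {..n})" "e ` {..n} \<subseteq> I" using re by auto
    have "emeasure M (Y n) \<le> (\<Sum>i\<in>e ` {..n}. emeasure M (X i))"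
      unfolding Y_def by (rule emeasure_subadditive_finite) (use F Xs in auto)
    also have "\<dots> \<le> (\<Sum>i\<in>e ` {..n}. ennreal (f i))" by (intro sum_mono le) (use F in auto)
    also have "\<dots> = ennreal (sum f (e ` {..n}))" using F nn by (intro sum_ennreal) auto
    also have "\<dots> \<le> ennreal S" by (intro ennreal_leI S F)
    finally show ?thesis .
  qed
  then have "(SUP n. emeasure M (Y n)) \<le> ennreal S" by (intro SUP_least)
  then show ?thesis unfolding UY SUP_emeasure_incseq[OF Ysets inc] .
qed

text \<open>The threshold C (l_1 ... l_t h)^4 of the exceptional set is C divided by the product of the weights
  of l_1, ..., l_t and h; summability of the weights makes the union bound finite.\<close>
definition weight :: "nat \<Rightarrow> real" where "weight n = 1 / real (max 1 n) ^ 4"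

lemma weight_nonneg: "weight n \<ge> 0"
  by (simp add: weight_def)

lemma weight_Suc: "weight (Suc n) = 1 / real (Suc n) ^ 4"
  by (simp add: weight_def)

lemma weight_Suc_summable: "summable (\<lambda>n. weight (Suc n))"
proof (rule summable_comparison_test')
  show "summable (\<lambda>n. 1 / real ((n + 1)^2))" using inverse_squares_sums by (rule sums_summable)
  fix n show "norm (weight (Suc n)) \<le> 1 / real ((n + 1)^2)"
    unfolding weight_Suc by (simp add: field_simps power_increasing)
qed

lemma weight_summable: "summable weight"
  using weight_Suc_summable by (simp add: summable_Suc_iff)


definition weight_total :: "nat \<Rightarrow> real" where
  "weight_total t = suminf weight ^ t * (\<Sum>n. weight (Suc n))"

lemma weight_total_nonneg: "weight_total t \<ge> 0"
  unfolding weight_total_def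
  using suminf_nonneg[OF weight_summable weight_nonneg] suminf_nonneg[OF weight_Suc_summable weight_nonneg]
  by simp

definition exponents :: "nat \<Rightarrow> (nat \<Rightarrow> nat) set" where
  "exponents t = PiE {..<t} (\<lambda>_. UNIV)"

lemma countable_exponents: "countable (exponents t)"
  unfolding exponents_def by (rule countable_PiE) auto

lemma finite_exponent_pairs_bounded:
  assumes fin: "finite F" and sub: "F \<subseteq> exponents t \<times> (UNIV :: nat set)"
  obtains N where "F \<subseteq> PiE {..<t} (\<lambda>_. {..N}) \<times> {..N}"
proof
  define N where "N = Max (insert 0 ((\<lambda>(l, h). h + (\<Sum>i<t. l i)) ` F))"
  show "F \<subseteq> PiE {..<t} (\<lambda>_. {..N}) \<times> {..N}"
  proof
    fix lh assume "lh \<in> F"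
    then obtain l h where lh: "lh = (l, h)" "(l, h) \<in> F" by (cases lh) auto
    then have bound: "h + (\<Sum>i<t. l i) \<le> N" unfolding N_def using fin by (intro Max_ge) auto
    have "l i \<le> N" if "i < t" for i
      using member_le_sum[of i "{..<t}" l] that bound by simp
    then show "lh \<in> PiE {..<t} (\<lambda>_. {..N}) \<times> {..N}"
      using sub lh bound by (auto simp: exponents_def PiE_iff)
  qed
qed

lemma sum_exponent_pairs_le:
  fixes w u :: "nat \<Rightarrow> real"
  assumes w: "summable w" "\<And>n. w n \<ge> 0" and u: "summable u" "\<And>n. u n \<ge> 0"
    and F: "finite F" "F \<subseteq> exponents t \<times> (UNIV :: nat set)"
  shows "(\<Sum>(l, h)\<in>F. (\<Prod>i<t. w (l i)) * u h) \<le> suminf w ^ t * suminf u"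
proof -
  obtain N where box: "F \<subseteq> PiE {..<t} (\<lambda>_. {..N}) \<times> {..N}"
    using finite_exponent_pairs_bounded[OF F] .
  have "(\<Sum>(l, h)\<in>F. (\<Prod>i<t. w (l i)) * u h)
      \<le> (\<Sum>(l, h)\<in>PiE {..<t} (\<lambda>_. {..N}) \<times> {..N}. (\<Prod>i<t. w (l i)) * u h)"
    by (rule sum_mono2[OF _ box]) (auto intro!: finite_PiE mult_nonneg_nonneg prod_nonneg w u)
  also have "\<dots> = (\<Sum>l\<in>PiE {..<t} (\<lambda>_. {..N}). \<Prod>i<t. w (l i)) * (\<Sum>h\<le>N. u h)"
    by (simp add: sum_product sum.cartesian_product)
  also have "(\<Sum>l\<in>PiE {..<t} (\<lambda>_. {..N}). \<Prod>i<t. w (l i)) = (\<Prod>i<t. \<Sum>n\<le>N. w n)"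
    by (rule prod_sum_PiE[symmetric]) auto
  also have "(\<Prod>i<t. \<Sum>n\<le>N. w n) * (\<Sum>h\<le>N. u h) \<le> suminf w ^ t * suminf u"
  proof (rule mult_mono)
    have "(\<Sum>n\<le>N. w n) \<le> suminf w" by (rule sum_le_suminf) (use w in auto)
    then show "(\<Prod>i<t. \<Sum>n\<le>N. w n) \<le> suminf w ^ t"
      using prod_mono[of "{..<t}" "\<lambda>_. \<Sum>n\<le>N. w n" "\<lambda>_. suminf w"] by (simp add: sum_nonneg w)
    show "(\<Sum>h\<le>N. u h) \<le> suminf u" by (rule sum_le_suminf) (use u in auto)
    show "0 \<le> suminf w ^ t" using suminf_nonneg[OF w] by simp
    show "0 \<le> (\<Sum>h\<le>N. u h)" by (simp add: sum_nonneg u)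
  qed
  finally show ?thesis .
qed

definition power_prod :: "nat \<Rightarrow> (nat \<Rightarrow> 'a::field poly) \<Rightarrow> (nat \<Rightarrow> nat) \<Rightarrow> 'a poly" where
  "power_prod t b l = (\<Prod>i<t. b i ^ l i)"

definition max1_prod :: "nat \<Rightarrow> (nat \<Rightarrow> nat) \<Rightarrow> real" where
  "max1_prod t l = real (\<Prod>i<t. max 1 (l i))"

definition quot_bound :: "nat \<Rightarrow> real \<Rightarrow> (nat \<Rightarrow> nat) \<Rightarrow> nat \<Rightarrow> real" where
  "quot_bound t C l h = C * (max1_prod t l * real (Suc h)) ^ 4"

definition bad_quot :: "nat \<Rightarrow> (nat \<Rightarrow> 'a::{field,finite} poly) \<Rightarrow> real \<Rightarrow> (nat \<Rightarrow> nat) \<Rightarrow> nat \<Rightarrow> (nat \<Rightarrow> 'a) set" where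
  "bad_quot t b C l h = large_quot (power_prod t b l) h (quot_bound t C l h)"

definition exceptional :: "nat \<Rightarrow> (nat \<Rightarrow> 'a::{field,finite} poly) \<Rightarrow> real \<Rightarrow> (nat \<Rightarrow> 'a) set" where
  "exceptional t b C =
     {a. is_rational_fls (seq_to_fls a)} \<union> (\<Union>(l, h)\<in>exponents t \<times> UNIV. bad_quot t b C l h)"

lemma lead_coeff_power_prod: "(\<forall>i<t. lead_coeff (b i) = 1) \<Longrightarrow> lead_coeff (power_prod t b l) = 1"
  unfolding power_prod_def by (simp add: lead_coeff_prod lead_coeff_power)

lemma max1_prod_ge_1: "max1_prod t l \<ge> 1"
proof -
  have "(1::nat) \<le> (\<Prod>i<t. max 1 (l i))" by (intro prod_ge_1) auto
  then show ?thesis unfolding max1_prod_def by (metis of_nat_1 of_nat_mono)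
qed

lemma prod_weight: "(\<Prod>i<t. weight (l i)) = 1 / max1_prod t l ^ 4"
  unfolding weight_def max1_prod_def by (simp add: prod_dividef prod_power_distrib)

lemma mem_bad_quot_iff:
  fixes a :: "nat \<Rightarrow> 'a::{field,finite}"
  shows "a \<in> bad_quot t b C l h \<longleftrightarrow>
     C * (real (\<Prod>i<t. max 1 (l i)) * real (Suc h)) ^ 4
       \<le> real CARD('a) ^ degree (cf_quot (poly_to_fls (\<Prod>i<t. b i ^ l i) * seq_to_fls a) (Suc h))"
  by (simp add: bad_quot_def large_quot_def quot_bound_def max1_prod_def power_prod_def
      degree_cf_quot_Suc_mult)

lemma bad_quot_restrict: "bad_quot t b C (restrict l {..<t}) h = bad_quot t b C l h"
proof -
  have "power_prod t b (restrict l {..<t}) = power_prod t b l"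
    unfolding power_prod_def by (intro prod.cong) auto
  moreover have "max1_prod t (restrict l {..<t}) = max1_prod t l"
    unfolding max1_prod_def by (intro arg_cong[where f = real] prod.cong) auto
  ultimately show ?thesis by (simp add: bad_quot_def quot_bound_def)
qed

lemma bad_quot_sets: "bad_quot t b C l h \<in> sets haarH"
  unfolding bad_quot_def by (rule large_quot_sets)

lemma exceptional_sets: "exceptional t b C \<in> sets haarH"
  unfolding exceptional_def
  by (intro sets.Un haarH_countable_sets[OF countable_rational_seqs] sets.countable_UN'')
    (auto intro: bad_quot_sets countable_SIGMA countable_exponents)

lemma E_set_eq: "E_set t b C = UNIV - exceptional t b C"
proof -
  have all_Suc: "(\<forall>h::nat. 1 \<le> h \<longrightarrow> Q h) \<longleftrightarrow> (\<forall>h. Q (Suc h))" for Q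
  proof
    assume "\<forall>h. Q (Suc h)"
    then show "\<forall>h::nat. 1 \<le> h \<longrightarrow> Q h" by (metis Suc_le_D One_nat_def)
  qed simp
  have restrict: "(\<forall>l h. a \<notin> bad_quot t b C l h) \<longleftrightarrow> (\<forall>(l, h)\<in>exponents t \<times> UNIV. a \<notin> bad_quot t b C l h)"
    for a :: "nat \<Rightarrow> 'a"
  proof (intro iffI)
    assume "\<forall>(l, h)\<in>exponents t \<times> UNIV. a \<notin> bad_quot t b C l h"
    then have "a \<notin> bad_quot t b C (restrict l {..<t}) h" for l h by (auto simp: exponents_def)
    then show "\<forall>l h. a \<notin> bad_quot t b C l h" by (simp add: bad_quot_restrict)
  qed auto
  have "a \<in> E_set t b C \<longleftrightarrow> \<not> is_rational_fls (seq_to_fls a) \<and> (\<forall>l h. a \<notin> bad_quot t b C l h)" for a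
    unfolding E_set_def mem_Collect_eq all_Suc by (simp add: mem_bad_quot_iff not_le)
  then show ?thesis using restrict by (auto simp: exceptional_def)
qed

lemma emeasure_bad_quot_le:
  fixes b :: "nat \<Rightarrow> 'a::{field,finite} poly"
  assumes monic: "\<forall>i<t. lead_coeff (b i) = 1" and C: "C > 0"
  shows "emeasure haarH (bad_quot t b C l h)
    \<le> ennreal (real CARD('a) / C * ((\<Prod>i<t. weight (l i)) * weight (Suc h)))"
proof -
  have "quot_bound t C l h > 0" using C max1_prod_ge_1[of t l] by (simp add: quot_bound_def)
  then have "emeasure haarH (bad_quot t b C l h) \<le> ennreal (real CARD('a) / quot_bound t C l h)"
    unfolding bad_quot_def by (rule emeasure_large_quot_le[OF lead_coeff_power_prod[OF monic]])
  also have "real CARD('a) / quot_bound t C l h = real CARD('a) / C * ((\<Prod>i<t. weight (l i)) * weight (Suc h))"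
    unfolding quot_bound_def prod_weight weight_Suc by (simp add: power_mult_distrib)
  finally show ?thesis .
qed

lemma emeasure_exceptional_le:
  fixes b :: "nat \<Rightarrow> 'a::{field,finite} poly"
  assumes monic: "\<forall>i<t. lead_coeff (b i) = 1" and C: "C > 0"
  shows "emeasure haarH (exceptional t b C) \<le> ennreal (real CARD('a) / C * weight_total t)"
proof -
  let ?K = "real CARD('a) / C"
  have "emeasure haarH (exceptional t b C) = emeasure haarH (\<Union>(l, h)\<in>exponents t \<times> UNIV. bad_quot t b C l h)"
    unfolding exceptional_def Un_commute[of "{a. is_rational_fls (seq_to_fls a)}"]
    by (intro emeasure_Un_null_set haarH_countable_null[OF countable_rational_seqs] sets.countable_UN'')
      (auto intro: bad_quot_sets countable_SIGMA countable_exponents)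
  also have "\<dots> \<le> ennreal (?K * weight_total t)"
  proof (rule emeasure_UN_countable_le[where f = "\<lambda>(l, h). ?K * ((\<Prod>i<t. weight (l i)) * weight (Suc h))"])
    show "countable (exponents t \<times> (UNIV :: nat set))" by (intro countable_SIGMA countable_exponents) auto
    fix lh :: "(nat \<Rightarrow> nat) \<times> nat"
    show "(\<lambda>(l, h). bad_quot t b C l h) lh \<in> sets haarH"
      by (simp add: case_prod_unfold bad_quot_sets)
    show "emeasure haarH ((\<lambda>(l, h). bad_quot t b C l h) lh)
        \<le> ennreal ((\<lambda>(l, h). ?K * ((\<Prod>i<t. weight (l i)) * weight (Suc h))) lh)"
      using emeasure_bad_quot_le[OF monic C] by (simp add: case_prod_unfold)
    show "0 \<le> (\<lambda>(l, h). ?K * ((\<Prod>i<t. weight (l i)) * weight (Suc h))) lh"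
      using C by (simp add: case_prod_unfold weight_nonneg prod_nonneg)
  next
    fix F assume "finite F" "F \<subseteq> exponents t \<times> (UNIV :: nat set)"
    then have "(\<Sum>(l, h)\<in>F. (\<Prod>i<t. weight (l i)) * weight (Suc h)) \<le> weight_total t"
      unfolding weight_total_def
      by (intro sum_exponent_pairs_le weight_summable weight_Suc_summable weight_nonneg)
    moreover have "(\<Sum>lh\<in>F. (\<lambda>(l, h). ?K * ((\<Prod>i<t. weight (l i)) * weight (Suc h))) lh)
        = ?K * (\<Sum>(l, h)\<in>F. (\<Prod>i<t. weight (l i)) * weight (Suc h))"
      by (simp only: sum_distrib_left case_prod_unfold)
    ultimately show "(\<Sum>lh\<in>F. (\<lambda>(l, h). ?K * ((\<Prod>i<t. weight (l i)) * weight (Suc h))) lh) \<le> ?K * weight_total t"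
      using C by (auto intro!: divide_right_mono mult_left_mono)
  qed
  finally show ?thesis .
qed

lemma E_set_sets: "E_set t b C \<in> sets haarH"
  unfolding E_set_eq by (metis exceptional_sets sets.compl_sets space_haarH)

lemma measure_compl_E_set_le:
  fixes b :: "nat \<Rightarrow> 'a::{field,finite} poly"
  assumes monic: "\<forall>i<t. lead_coeff (b i) = 1" and C: "C > 0"
  shows "measure haarH (space haarH - E_set t b C) \<le> real CARD('a) * weight_total t / C"
proof -
  interpret prob_space "haarH :: (nat \<Rightarrow> 'a) measure" by (rule prob_space_haarH)
  have "space haarH - E_set t b C = exceptional t b C" by (auto simp: E_set_eq)
  moreover have "0 \<le> real CARD('a) / C * weight_total t" using C weight_total_nonneg by simp
  ultimately show ?thesis
    using emeasure_exceptional_le[OF monic C] by (simp add: emeasure_eq_measure ennreal_le_iff)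
qed

lemma divide_le_mult_ln_divide:
  fixes K C :: real
  assumes K: "K \<ge> 0" and C: "exp 1 \<le> C"
  shows "K / C \<le> K * ln C / C"
proof -
  from C have "C > 0" "1 \<le> ln C" by (auto simp: ln_ge_iff order_less_le_trans[OF exp_gt_zero])
  then show ?thesis using K by (intro divide_right_mono) (use mult_left_mono[of 1 "ln C" K] in auto)
qed

lemma (in prob_space) tendsto_prob_1_if_compl_le:
  assumes sets: "\<And>C. A C \<in> events"
    and le: "\<And>C. C > 0 \<Longrightarrow> prob (space M - A C) \<le> K / C"
  shows "((\<lambda>C. prob (A C)) \<longlongrightarrow> 1) at_top"
proof (rule tendsto_sandwich)
  show "\<forall>\<^sub>F C in at_top. 1 - K / C \<le> prob (A C)"
  proof (rule eventually_mono[OF eventually_gt_at_top[of 0]])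
    fix C :: real assume "C > 0"
    then show "1 - K / C \<le> prob (A C)" using le[of C] prob_compl[OF sets[of C]] by linarith
  qed
  show "\<forall>\<^sub>F C in at_top. prob (A C) \<le> 1" by simp
  have "((\<lambda>C::real. K / C) \<longlongrightarrow> 0) at_top"
    by (rule real_tendsto_divide_at_top[OF tendsto_const filterlim_ident])
  then show "((\<lambda>C. 1 - K / C) \<longlongrightarrow> 1) at_top"
    using tendsto_diff[OF tendsto_const[of 1]] by fastforce
qed simp

theorem mainTheorem11:
  fixes t :: nat
  assumes "prime (CARD('a::{field,finite}))" and "t \<ge> 1"
  shows "\<exists>c::real. \<forall>b :: nat \<Rightarrow> 'a poly.
    (\<forall>i<t. lead_coeff (b i) = 1 \<and> degree (b i) \<ge> 1) \<and>
    (\<forall>i<t. \<forall>j<t. i \<noteq> j \<longrightarrow> coprime (b i) (b j)) \<longrightarrow>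
      (\<exists>C0. \<forall>C\<ge>C0. E_set t b C \<in> sets haarH \<and>
          measure haarH (space haarH - E_set t b C) \<le> c * ln C / C) \<and>
      ((\<lambda>C. measure haarH (E_set t b C)) \<longlongrightarrow> 1) at_top"
proof -
  interpret prob_space "haarH :: (nat \<Rightarrow> 'a) measure" by (rule prob_space_haarH)
  define K where "K = real CARD('a) * weight_total t"
  have K: "K \<ge> 0" unfolding K_def using weight_total_nonneg by simp
  show ?thesis
  proof (rule exI[of _ K], intro allI impI conjI)
    fix b :: "nat \<Rightarrow> 'a poly"
    assume "(\<forall>i<t. lead_coeff (b i) = 1 \<and> degree (b i) \<ge> 1) \<and>
      (\<forall>i<t. \<forall>j<t. i \<noteq> j \<longrightarrow> coprime (b i) (b j))"
    then have monic: "\<forall>i<t. lead_coeff (b i) = 1" by blast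
    have bound: "measure haarH (space haarH - E_set t b C) \<le> K / C" if "C > 0" for C
      using measure_compl_E_set_le[OF monic that] by (simp add: K_def)
    show "\<exists>C0. \<forall>C\<ge>C0. E_set t b C \<in> sets haarH \<and>
        measure haarH (space haarH - E_set t b C) \<le> K * ln C / C"
    proof (rule exI[of _ "exp 1"], intro allI impI conjI)
      fix C :: real assume C: "exp 1 \<le> C"
      then have "C > 0" using exp_gt_zero order_less_le_trans by blast
      then show "measure haarH (space haarH - E_set t b C) \<le> K * ln C / C"
        using bound divide_le_mult_ln_divide[OF K C] by (meson order_trans)
      show "E_set t b C \<in> sets haarH" by (rule E_set_sets)
    qed
    show "((\<lambda>C. measure haarH (E_set t b C)) \<longlongrightarrow> 1) at_top"
      by (rule tendsto_prob_1_if_compl_le[OF E_set_sets bound])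
  qed
qed

end
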